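(* Let $q$ be a prime power, $A=\mathbb{F}_q[T]$, and let $m\in A$ be a monic polynomial of degree $d>1$. Write $\det D_m^{(-)}(X)=1+a_1X+a_2X^2+\cdots$ with the matrix $D_m^{(-)}(X)$ defined in the context. Then: (1) $a_1=0$; (2) if $\deg m>2$, then $a_2=0$; (3) if $\deg m=2$, then $a_2=\frac{N_m}{2}\{(q-1)(1-C_m)+N_m-1\}$, where $C_m=\#\{i\in\{1,\dots,N_m\}: L(\alpha_i^{-1})=1\}$.
   Context: For $\alpha\in(A/(m))^\times$ let $r_\alpha\in A$ be the unique representative of $\alpha$ with $\deg r_\alpha<d$; set $\mathrm{Deg}(\alpha)=\deg r_\alpha$ and let $L(\alpha)\in\mathbb{F}_q^\times$ be the leading coefficient of $r_\alpha$. Let $N_m=\#(A/(m))^\times/(q-1)$ and let $\alpha_1,\dots,\alpha_{N_m}$ be all elements of $(A/(m))^\times$ with $L(\alpha)=1$. For a character $\lambda$ of $\mathbb{F}_q^\times$ put $c_{ij}^\lambda=\lambda^{-1}(L(\alpha_i\alpha_j^{-1}))$, $d_{ij}=\mathrm{Deg}(\alpha_i\alpha_j^{-1})$, $D_m^{(\lambda)}(X)=(c_{ij}^\lambda X^{d_{ij}})_{i,j=1,\dots,N_m}$, and $D_m^{(-)}(X)=\prod_{\lambda\ne1}D_m^{(\lambda)}(X)$, the product over all non-trivial characters of $\mathbb{F}_q^\times$. (Since $D_m^{(-)}(0)$ is the identity matrix, $\det D_m^{(-)}(X)$ has constant term $1$ and integer coefficients.) *)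

theory Defs
  imports "HOL-Computational_Algebra.Polynomial" "Jordan_Normal_Form.Determinant"
begin

definition unit_reps :: "'a::{finite,field} poly \<Rightarrow> 'a poly set" where
  "unit_reps m = {r. degree r < degree m \<and> coprime r m}"

definition N_m :: "'a::{finite,field} poly \<Rightarrow> nat" where
  "N_m m = card (unit_reps m) div (card (UNIV :: 'a set) - 1)"

definition monic_unit_reps :: "'a::{finite,field} poly \<Rightarrow> 'a poly set" where
  "monic_unit_reps m = {r \<in> unit_reps m. lead_coeff r = 1}"

definition inv_rep :: "'a::{finite,field} poly \<Rightarrow> 'a poly \<Rightarrow> 'a poly" where
  "inv_rep m r = (THE s. s \<in> unit_reps m \<and> (r * s) mod m = 1)"

definition quot_rep :: "'a::{finite,field} poly \<Rightarrow> 'a poly \<Rightarrow> 'a poly \<Rightarrow> 'a poly" where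
  "quot_rep m a b = (a * inv_rep m b) mod m"

text \<open>Characters of F_q^x (complex valued, extended by 0 at 0).\<close>
definition characters :: "('a::{finite,field} \<Rightarrow> complex) set" where
  "characters = {\<chi>. \<chi> 0 = 0 \<and> \<chi> 1 = 1 \<and>
      (\<forall>x y. x \<noteq> 0 \<longrightarrow> y \<noteq> 0 \<longrightarrow> \<chi> (x * y) = \<chi> x * \<chi> y)}"

definition nontrivial_characters :: "('a::{finite,field} \<Rightarrow> complex) set" where
  "nontrivial_characters = {\<chi> \<in> characters. \<exists>x. x \<noteq> 0 \<and> \<chi> x \<noteq> 1}"

definition D_mat :: "'a::{finite,field} poly \<Rightarrow> 'a poly list \<Rightarrow> ('a \<Rightarrow> complex) \<Rightarrow> complex poly mat" where
  "D_mat m als \<chi> = mat (length als) (length als)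
     (\<lambda>(i, j). monom (inverse (\<chi> (lead_coeff (quot_rep m (als ! i) (als ! j)))))
                     (degree (quot_rep m (als ! i) (als ! j))))"

definition D_minus :: "'a::{finite,field} poly \<Rightarrow> 'a poly list \<Rightarrow> ('a \<Rightarrow> complex) list \<Rightarrow> complex poly mat" where
  "D_minus m als chis = foldr (\<lambda>\<chi> M. D_mat m als \<chi> * M) chis (1\<^sub>m (length als))"

definition C_m :: "'a::{finite,field} poly \<Rightarrow> nat" where
  "C_m m = card {r \<in> monic_unit_reps m. lead_coeff (inv_rep m r) = 1}"

end

theory Submission
  imports Defs "HOL-Algebra.Multiplicative_Group" "HOL-Algebra.Algebraic_Closure_Type"
begin

text \<open>
  Every \<open>D\<^sub>m\<^sup>\<lambda>(X)\<close> is a matrix of monomials with identity constant term whose off-diagonal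
  entries have positive degree, because distinct monic representatives are never proportional.
  In the Leibniz expansion of its determinant only the identity contributes to the coefficients
  of \<open>1\<close> and \<open>X\<close>, and only the transpositions \<open>(i j)\<close> with \<open>d(i,j) = d(j,i) = 1\<close> contribute to
  \<open>X\<^sup>2\<close>. As all factors are \<open>1 + O(X\<^sup>2)\<close>, the \<open>X\<^sup>2\<close>-coefficient of \<open>det D\<^sub>m\<^sup>-(X)\<close> is the sum of
  those of the factors. If \<open>deg m > 2\<close>, two linear polynomials cannot multiply to \<open>1\<close> modulo
  \<open>m\<close>, so no transposition contributes. If \<open>deg m = 2\<close>, all off-diagonal entries are linear,
  and orthogonality of characters turns the sum over the nontrivial \<open>\<lambda>\<close> into a count of the
  pairs with \<open>L(\<alpha>\<^sub>i/\<alpha>\<^sub>j) L(\<alpha>\<^sub>j/\<alpha>\<^sub>i) = 1\<close>; making \<open>\<alpha>\<^sub>i/\<alpha>\<^sub>j\<close> monic matches these pairs, for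
  fixed \<open>j\<close>, with the \<open>\<alpha> \<noteq> 1\<close> satisfying \<open>L(1/\<alpha>) = 1\<close>, of which there are \<open>C\<^sub>m - 1\<close>.
\<close>


hide_const (open) up_ring.coeff up_ring.monom Polynomials.degree Polynomials.lead_coeff

section \<open>Characters of a finite field\<close>

lemma power_mod_exponent:
  fixes x :: "'b::monoid_mult"
  assumes "x ^ n = 1"
  shows "x ^ (k mod n) = x ^ k"
  by (metis assms div_mult_mod_eq power_add power_mult power_one mult_1 mult.commute)

lemma card_field_ge_2: "card (UNIV :: 'a::{finite,field} set) \<ge> 2"
  using card_mono[of UNIV "{0::'a, 1}"] by simp

lemma finite_field_cyclic:
  obtains g :: "'a::{finite,field}"
  where "g \<noteq> 0" "g ^ (card (UNIV :: 'a set) - 1) = 1"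
    "bij_betw (\<lambda>i. g ^ i) {..<card (UNIV :: 'a set) - 1} (UNIV - {0})"
proof -
  define R where "R = (ring_of_type_algebra :: 'a ring)"
  interpret field R unfolding R_def by (rule field_from_type_algebra)
  have carrier: "carrier (Multiplicative_Group.mult_of R) = UNIV - {0}"
    by (simp add: R_def ring_of_type_algebra_def)
  have pow: "x [^]\<^bsub>R\<^esub> i = x ^ i" for x :: 'a and i :: nat
    by (induction i) (simp_all add: R_def ring_of_type_algebra_def mult.commute)
  have fin: "finite (carrier R)" by (simp add: R_def ring_of_type_algebra_def)
  from finite_field_mult_group_has_gen[OF fin] obtain g
    where g: "g \<in> carrier (Multiplicative_Group.mult_of R)"
      and gen: "carrier (Multiplicative_Group.mult_of R) = {g [^]\<^bsub>R\<^esub> i |i::nat. i \<in> UNIV}" ..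
  have "g \<noteq> 0" using g unfolding carrier by simp
  define n where "n = card (UNIV :: 'a set) - 1"
  have "order (Multiplicative_Group.mult_of R) = n"
    by (simp add: order_mult_of[OF fin] order_def R_def ring_of_type_algebra_def n_def)
  moreover have "\<one>\<^bsub>R\<^esub> = 1" by (simp add: R_def ring_of_type_algebra_def)
  ultimately have g_order: "g ^ n = 1"
    using group.pow_order_eq_1[OF field_mult_group g] by (simp add: Multiplicative_Group.nat_pow_mult_of pow)
  have n_pos: "n > 0" using card_field_ge_2[where 'a='a] by (simp add: n_def)
  have image: "(\<lambda>i. g ^ i) ` {..<n} = UNIV - {0}"
  proof (intro equalityI subsetI)
    fix x :: 'a assume "x \<in> UNIV - {0}"
    then obtain i where "x = g ^ i"
      using gen unfolding carrier pow by blast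
    hence "x = g ^ (i mod n)" by (simp add: power_mod_exponent[OF g_order])
    thus "x \<in> (\<lambda>i. g ^ i) ` {..<n}" using n_pos by auto
  qed (use \<open>g \<noteq> 0\<close> in auto)
  moreover have "card ((\<lambda>i. g ^ i) ` {..<n}) = card {..<n}"
    unfolding image by (simp add: n_def card_Diff_singleton)
  ultimately have "bij_betw (\<lambda>i. g ^ i) {..<n} (UNIV - {0})"
    by (simp add: bij_betw_def eq_card_imp_inj_on)
  with g_order \<open>g \<noteq> 0\<close> show thesis using that n_def by blast
qed

lemma sum_roots_unity_power:
  assumes "0 < i" "i < n"
  shows "(\<Sum>z | z ^ n = 1. (z::complex) ^ i) = 0"
proof -
  define \<omega> where "\<omega> = cis (2 * pi * real i / real n)"
  have root: "bij_betw (\<lambda>k. cis (2 * pi * real k / real n)) {..<n} {z. z ^ n = 1}"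
    using assms by (intro bij_betw_roots_unity) simp
  have "\<omega> \<noteq> 1"
  proof
    assume "\<omega> = 1"
    hence "cis (2 * pi * real i / real n) = cis (2 * pi * real 0 / real n)" by (simp add: \<omega>_def)
    from inj_onD[OF bij_betw_imp_inj_on[OF root] this] show False using assms by simp
  qed
  have "\<omega> ^ n = 1" using assms by (simp add: \<omega>_def DeMoivre)
  have "(\<Sum>z | z ^ n = 1. z ^ i) = (\<Sum>k<n. cis (2 * pi * real k / real n) ^ i)"
    by (rule sum.reindex_bij_betw[OF root, symmetric])
  also have "\<dots> = (\<Sum>k<n. \<omega> ^ k)"
    by (intro sum.cong refl) (simp add: \<omega>_def DeMoivre mult_ac)
  also have "\<dots> = 0"
    using \<open>\<omega> \<noteq> 1\<close> \<open>\<omega> ^ n = 1\<close> by (simp add: geometric_sum)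
  finally show ?thesis .
qed

lemma character_0: "\<chi> \<in> characters \<Longrightarrow> \<chi> 0 = 0"
  and character_1: "\<chi> \<in> characters \<Longrightarrow> \<chi> 1 = 1"
  and character_mult: "\<chi> \<in> characters \<Longrightarrow> x \<noteq> 0 \<Longrightarrow> y \<noteq> 0 \<Longrightarrow> \<chi> (x * y) = \<chi> x * \<chi> y"
  by (simp_all add: characters_def)

lemma character_power: "\<chi> \<in> characters \<Longrightarrow> x \<noteq> 0 \<Longrightarrow> \<chi> (x ^ k) = \<chi> x ^ k"
  by (induction k) (simp_all add: character_1 character_mult)

lemma character_inverse:
  assumes "\<chi> \<in> characters" "x \<noteq> 0"
  shows "\<chi> (inverse x) = inverse (\<chi> x)"
proof -
  have "\<chi> x * \<chi> (inverse x) = 1"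
    using character_mult[OF assms, of "inverse x"] assms by (simp add: character_1)
  thus ?thesis by (simp add: inverse_unique)
qed

lemma bij_betw_characters_roots_unity:
  fixes g :: "'a::{finite,field}"
  assumes g_order: "g ^ n = 1" and cyclic: "bij_betw (\<lambda>i. g ^ i) {..<n} (UNIV - {0})"
  shows "bij_betw (\<lambda>\<chi>. \<chi> g) characters {z::complex. z ^ n = 1}"
proof (rule bij_betwI')
  have "n > 0"
    using bij_betw_same_card[OF cyclic] card_field_ge_2[where 'a='a] by (simp add: card_Diff_singleton)
  hence "g \<noteq> 0" using g_order by (auto simp: power_0_left)
  have powers: "\<exists>i. x = g ^ i" if "x \<noteq> 0" for x
    using bij_betw_imp_surj_on[OF cyclic] that by auto
  show "(\<chi> g = \<psi> g) = (\<chi> = \<psi>)" if "\<chi> \<in> characters" "\<psi> \<in> characters" for \<chi> \<psi>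
  proof
    assume "\<chi> g = \<psi> g"
    show "\<chi> = \<psi>"
    proof
      fix x show "\<chi> x = \<psi> x"
        using powers[of x] that \<open>g \<noteq> 0\<close> \<open>\<chi> g = \<psi> g\<close>
        by (cases "x = 0") (auto simp: character_0 character_power)
    qed
  qed simp
  show "\<chi> g \<in> {z. z ^ n = 1}" if "\<chi> \<in> characters" for \<chi>
    using that \<open>g \<noteq> 0\<close> g_order by (simp flip: character_power add: character_1)
  fix \<zeta> :: complex assume "\<zeta> \<in> {z. z ^ n = 1}"
  hence "\<zeta> ^ n = 1" by simp
  define \<chi> where "\<chi> x = (if x = 0 then 0 else \<zeta> ^ inv_into {..<n} (\<lambda>i. g ^ i) x)" for x
  have \<chi>_power: "\<chi> (g ^ i) = \<zeta> ^ i" for i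
  proof -
    have "inv_into {..<n} (\<lambda>i. g ^ i) (g ^ (i mod n)) = i mod n"
      using bij_betw_imp_inj_on[OF cyclic] \<open>n > 0\<close> by (simp add: inv_into_f_f)
    thus ?thesis
      using \<open>g \<noteq> 0\<close> by (simp add: \<chi>_def power_mod_exponent[OF g_order]
          power_mod_exponent[OF \<open>\<zeta> ^ n = 1\<close>])
  qed
  have "\<chi> \<in> characters"
    unfolding characters_def
  proof (intro CollectI conjI allI impI)
    show "\<chi> 1 = 1" using \<chi>_power[of 0] by simp
    fix x y :: 'a assume "x \<noteq> 0" "y \<noteq> 0"
    then obtain i j where "x = g ^ i" "y = g ^ j" using powers by blast
    thus "\<chi> (x * y) = \<chi> x * \<chi> y" by (simp add: \<chi>_power flip: power_add)
  qed (simp add: \<chi>_def)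
  moreover have "\<zeta> = \<chi> g" using \<chi>_power[of 1] by simp
  ultimately show "\<exists>\<chi>\<in>characters. \<zeta> = \<chi> g" by blast
qed

lemma finite_characters: "finite (characters :: ('a::{finite,field} \<Rightarrow> complex) set)"
  and card_characters: "card (characters :: ('a \<Rightarrow> complex) set) = card (UNIV :: 'a set) - 1"
proof -
  obtain g :: 'a where "g \<noteq> 0" "g ^ (card (UNIV :: 'a set) - 1) = 1"
    and "bij_betw (\<lambda>i. g ^ i) {..<card (UNIV :: 'a set) - 1} (UNIV - {0})"
    by (rule finite_field_cyclic)
  from bij_betw_characters_roots_unity[OF this(2,3)]
  have bij: "bij_betw (\<lambda>\<chi>. \<chi> g) characters {z::complex. z ^ (card (UNIV :: 'a set) - 1) = 1}" .
  have "card (UNIV :: 'a set) - 1 > 0" using card_field_ge_2[where 'a='a] by simp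
  thus "finite (characters :: ('a \<Rightarrow> complex) set)"
    and "card (characters :: ('a \<Rightarrow> complex) set) = card (UNIV :: 'a set) - 1"
    using bij_betw_finite[OF bij] bij_betw_same_card[OF bij]
    by (simp_all add: finite_roots_unity card_roots_unity_eq)
qed

lemma sum_characters:
  fixes z :: "'a::{finite,field}"
  assumes "z \<noteq> 0"
  shows "(\<Sum>\<chi>\<in>characters. \<chi> z) = (if z = 1 then of_nat (card (UNIV :: 'a set)) - 1 else 0)"
proof -
  define n where "n = card (UNIV :: 'a set) - 1"
  obtain g :: 'a where "g \<noteq> 0" and g_order: "g ^ n = 1"
    and cyclic: "bij_betw (\<lambda>i. g ^ i) {..<n} (UNIV - {0})"
    unfolding n_def by (rule finite_field_cyclic)
  obtain i where "i < n" and z: "z = g ^ i"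
    using bij_betw_imp_surj_on[OF cyclic] assms by (metis DiffI UNIV_I imageE lessThan_iff singletonD)
  show ?thesis
  proof (cases "z = 1")
    case True
    thus ?thesis using card_characters[where 'a='a] card_field_ge_2[where 'a='a]
      by (simp add: character_1 of_nat_diff)
  next
    case False
    hence "0 < i" using z by (cases i) auto
    have "(\<Sum>\<chi>\<in>characters. \<chi> z) = (\<Sum>\<chi>\<in>characters. \<chi> g ^ i)"
      using z \<open>g \<noteq> 0\<close> by (intro sum.cong) (simp_all add: character_power)
    also have "\<dots> = (\<Sum>\<zeta> | \<zeta> ^ n = 1. \<zeta> ^ i)"
      using bij_betw_characters_roots_unity[OF g_order cyclic] by (rule sum.reindex_bij_betw)
    also have "\<dots> = 0" using \<open>0 < i\<close> \<open>i < n\<close> by (rule sum_roots_unity_power)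
    finally show ?thesis using False by simp
  qed
qed

lemma characters_eq_insert_nontrivial:
  "characters = insert (\<lambda>x::'a::{finite,field}. if x = 0 then 0 else 1) nontrivial_characters"
  by (auto simp: nontrivial_characters_def characters_def fun_eq_iff split: if_splits)

lemma sum_nontrivial_characters:
  fixes z :: "'a::{finite,field}"
  assumes "z \<noteq> 0"
  shows "(\<Sum>\<chi>\<in>nontrivial_characters. \<chi> z) = (if z = 1 then of_nat (card (UNIV :: 'a set)) - 1 else 0) - 1"
proof -
  have "(\<lambda>x::'a. if x = 0 then 0 else 1) \<notin> nontrivial_characters"
    by (simp add: nontrivial_characters_def)
  moreover have "finite (nontrivial_characters :: ('a \<Rightarrow> complex) set)"
    using finite_characters by (simp add: characters_eq_insert_nontrivial)
  ultimately have "(\<Sum>\<chi>\<in>characters. \<chi> z) = 1 + (\<Sum>\<chi>\<in>nontrivial_characters. \<chi> z)"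
    using assms by (simp add: characters_eq_insert_nontrivial)
  thus ?thesis using sum_characters[OF assms] by (simp add: eq_diff_eq add.commute)
qed

section \<open>Units modulo \<open>m\<close>\<close>

lemma euclidean_bezout:
  fixes a b :: "'a::euclidean_ring_cancel"
  shows "\<exists>x y d. x * a + y * b = d \<and> d dvd a \<and> d dvd b"
proof (induction b arbitrary: a rule: measure_induct_rule[where f = euclidean_size])
  case (less b)
  show ?case
  proof (cases "b = 0")
    case True
    thus ?thesis by (intro exI[of _ 1] exI[of _ 0] exI[of _ a]) simp
  next
    case False
    then obtain x y d where xy: "x * b + y * (a mod b) = d" and "d dvd b" "d dvd a mod b"
      using less[of "a mod b" b] mod_size_less by blast
    hence "d dvd a" by (simp add: dvd_mod_iff)
    have "y * a + (x - y * (a div b)) * b = x * b + y * (a - (a div b) * b)"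
      by (simp add: algebra_simps)
    hence "y * a + (x - y * (a div b)) * b = d" using xy by (simp add: minus_div_mult_eq_mod)
    thus ?thesis using \<open>d dvd a\<close> \<open>d dvd b\<close> by blast
  qed
qed

lemma coprime_imp_inverse_mod:
  fixes a m :: "'a::euclidean_ring_cancel"
  assumes "coprime a m"
  obtains x where "(a * x) mod m = 1 mod m"
proof -
  obtain x y d where "x * a + y * m = d" "d dvd a" "d dvd m"
    using euclidean_bezout by blast
  moreover from this have "is_unit d" using assms coprime_common_divisor by blast
  then obtain k where "1 = d * k" by (rule dvdE)
  moreover have "a * (k * x) - 1 = k * (x * a + y * m) - 1 - (k * y) * m"
    by (simp add: algebra_simps)
  ultimately have "a * (k * x) - 1 = m * - (k * y)" by (simp add: mult.commute)
  hence "m dvd a * (k * x) - 1" by (rule dvdI)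
  hence "(a * (k * x)) mod m = 1 mod m" by (rule mod_eq_dvd_iff[THEN iffD2])
  thus thesis by (rule that)
qed

lemma coprime_mult_left_euclidean:
  fixes a b m :: "'a::euclidean_ring_cancel"
  assumes "coprime a m" "coprime b m"
  shows "coprime (a * b) m"
proof (rule coprimeI)
  obtain x y where x: "(a * x) mod m = 1 mod m" and y: "(b * y) mod m = 1 mod m"
    using assms coprime_imp_inverse_mod by metis
  have "(a * b * (x * y)) mod m = ((a * x) mod m * ((b * y) mod m)) mod m"
    by (simp add: mod_mult_eq ac_simps)
  also have "\<dots> = 1 mod m" unfolding x y mod_mult_eq by simp
  finally have inverse: "m dvd a * b * (x * y) - 1" by (simp only: mod_eq_dvd_iff)
  fix d assume "d dvd a * b" "d dvd m"
  have "d dvd a * b * (x * y)" using \<open>d dvd a * b\<close> by (rule dvd_mult2)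
  moreover have "d dvd a * b * (x * y) - 1" using \<open>d dvd m\<close> inverse by (rule dvd_trans)
  ultimately have "d dvd a * b * (x * y) - (a * b * (x * y) - 1)" by (rule dvd_diff)
  thus "is_unit d" by simp
qed

lemma coprime_smult_left:
  fixes r m :: "'a::field poly"
  assumes "c \<noteq> 0" "coprime r m"
  shows "coprime (smult c r) m"
proof (rule coprimeI)
  fix d assume "d dvd smult c r" "d dvd m"
  hence "d dvd r" using assms(1) by (simp add: dvd_smult_iff)
  with assms(2) show "is_unit d" using \<open>d dvd m\<close> by (rule coprime_common_divisor)
qed

lemma finite_degree_less: "finite {p :: 'a::{finite,zero} poly. degree p < n}"
proof -
  have "{p :: 'a poly. degree p < n} \<subseteq> Poly ` {xs. set xs \<subseteq> UNIV \<and> length xs \<le> n}"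
  proof
    fix p :: "'a poly" assume "p \<in> {p. degree p < n}"
    hence "length (coeffs p) \<le> n" by (cases "p = 0") (auto simp: length_coeffs_degree)
    thus "p \<in> Poly ` {xs. set xs \<subseteq> UNIV \<and> length xs \<le> n}"
      by (intro image_eqI[where x = "coeffs p"]) simp_all
  qed
  moreover have "finite {xs :: 'a list. set xs \<subseteq> UNIV \<and> length xs \<le> n}"
    by (rule finite_lists_length_le) simp
  ultimately show ?thesis by (meson finite_imageI finite_subset)
qed

definition monic_normalize :: "'a::field poly \<Rightarrow> 'a poly" where
  "monic_normalize r = smult (inverse (lead_coeff r)) r"

lemma lead_coeff_monic_normalize: "r \<noteq> 0 \<Longrightarrow> lead_coeff (monic_normalize r) = 1"
  by (simp add: monic_normalize_def)

lemma monic_normalize_monic: "lead_coeff r = 1 \<Longrightarrow> monic_normalize r = r"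
  by (simp add: monic_normalize_def)

lemma monic_normalize_smult:
  assumes "c \<noteq> 0" shows "monic_normalize (smult c r) = monic_normalize r"
proof -
  have "inverse (c * lead_coeff r) * c = inverse (lead_coeff r)"
    using assms by (cases "lead_coeff r = 0") (simp_all add: field_simps)
  thus ?thesis unfolding monic_normalize_def lead_coeff_smult smult_smult by (simp only:)
qed

lemma smult_lead_coeff_monic_normalize: "r \<noteq> 0 \<Longrightarrow> smult (lead_coeff r) (monic_normalize r) = r"
  by (simp add: monic_normalize_def)

locale unit_residues =
  fixes m :: "'a::{finite,field} poly"
  assumes degree_pos: "degree m > 0"
begin

abbreviation "U \<equiv> unit_reps m"
abbreviation "MU \<equiv> monic_unit_reps m"

lemma m_nonzero: "m \<noteq> 0"
  using degree_pos by auto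

lemma monic_unit_reps_iff: "r \<in> MU \<longleftrightarrow> r \<in> U \<and> lead_coeff r = 1"
  by (simp add: monic_unit_reps_def)

lemma unit_rep_nonzero: "r \<in> U \<Longrightarrow> r \<noteq> 0"
  using degree_pos by (auto simp: unit_reps_def is_unit_iff_degree[OF m_nonzero])

lemma unit_rep_mod: "r \<in> U \<Longrightarrow> r mod m = r"
  by (simp add: unit_reps_def mod_poly_less)

lemma one_mod: "1 mod m = 1"
  using degree_pos by (simp add: mod_poly_less)

lemma one_in_monic_unit_reps: "1 \<in> MU"
  using degree_pos by (simp add: monic_unit_reps_def unit_reps_def)

lemma mod_in_unit_reps:
  assumes "coprime x m" shows "x mod m \<in> U"
proof -
  have "coprime (x mod m) m" using assms by (simp add: coprime_mod_left_iff[OF m_nonzero])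
  moreover from this have "x mod m \<noteq> 0"
    using degree_pos by (auto simp: is_unit_iff_degree[OF m_nonzero])
  ultimately show ?thesis by (simp add: unit_reps_def degree_mod_less'[OF m_nonzero])
qed

lemma mult_mod_in_unit_reps: "a \<in> U \<Longrightarrow> b \<in> U \<Longrightarrow> (a * b) mod m \<in> U"
  by (intro mod_in_unit_reps coprime_mult_left_euclidean) (simp_all add: unit_reps_def)

lemma smult_in_unit_reps: "c \<noteq> 0 \<Longrightarrow> r \<in> U \<Longrightarrow> smult c r \<in> U"
  by (simp add: unit_reps_def coprime_smult_left)

lemma monic_normalize_in_monic_unit_reps:
  assumes "r \<in> U" shows "monic_normalize r \<in> MU"
proof -
  have "r \<noteq> 0" using assms by (rule unit_rep_nonzero)
  hence "monic_normalize r \<in> U"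
    using assms smult_in_unit_reps[of "inverse (lead_coeff r)" r] by (simp add: monic_normalize_def)
  thus ?thesis using \<open>r \<noteq> 0\<close> by (simp add: monic_unit_reps_iff lead_coeff_monic_normalize)
qed

lemma inv_rep_ex1:
  assumes "r \<in> U" shows "\<exists>!s. s \<in> U \<and> (r * s) mod m = 1"
proof -
  obtain x where x: "(r * x) mod m = 1 mod m"
    using assms coprime_imp_inverse_mod by (auto simp: unit_reps_def)
  show ?thesis
  proof
    show "x mod m \<in> U \<and> (r * (x mod m)) mod m = 1"
      using x one_mod invertible_coprime[of x r m]
      by (auto simp: mod_mult_right_eq mult.commute intro: mod_in_unit_reps)
  next
    fix s assume s: "s \<in> U \<and> (r * s) mod m = 1"
    have "s = (s * ((r * x) mod m)) mod m" using s x one_mod unit_rep_mod by simp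
    also have "\<dots> = (x * ((r * s) mod m)) mod m" by (simp add: mod_mult_right_eq ac_simps)
    also have "\<dots> = x mod m" using s by simp
    finally show "s = x mod m" .
  qed
qed

lemma inv_rep_in_unit_reps: "r \<in> U \<Longrightarrow> inv_rep m r \<in> U"
  and mult_inv_rep_mod: "r \<in> U \<Longrightarrow> (r * inv_rep m r) mod m = 1"
  using theI'[OF inv_rep_ex1, of r] by (simp_all add: inv_rep_def)

lemma inv_rep_eqI: "r \<in> U \<Longrightarrow> s \<in> U \<Longrightarrow> (r * s) mod m = 1 \<Longrightarrow> inv_rep m r = s"
  unfolding inv_rep_def by (rule the1_equality[OF inv_rep_ex1]) simp_all

lemma inv_rep_one: "inv_rep m 1 = 1"
  using one_in_monic_unit_reps one_mod by (intro inv_rep_eqI) (simp_all add: monic_unit_reps_iff)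

lemma inv_rep_smult:
  assumes "c \<noteq> 0" "r \<in> U" shows "inv_rep m (smult c r) = smult (inverse c) (inv_rep m r)"
  using assms mult_inv_rep_mod[OF assms(2)]
  by (intro inv_rep_eqI) (simp_all add: smult_in_unit_reps inv_rep_in_unit_reps mod_smult_left)

lemma quot_rep_in_unit_reps: "a \<in> U \<Longrightarrow> b \<in> U \<Longrightarrow> quot_rep m a b \<in> U"
  unfolding quot_rep_def by (rule mult_mod_in_unit_reps) (simp_all add: inv_rep_in_unit_reps)

lemma quot_rep_self: "a \<in> U \<Longrightarrow> quot_rep m a a = 1"
  by (simp add: quot_rep_def mult_inv_rep_mod)

lemma quot_rep_smult: "quot_rep m (smult c a) b = smult c (quot_rep m a b)"
  by (simp add: quot_rep_def mod_smult_left)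

lemma mult_quot_rep_mod:
  assumes "a \<in> U" "b \<in> U"
  shows "(quot_rep m a b * b) mod m = a"
proof -
  have "(quot_rep m a b * b) mod m = (a * (b * inv_rep m b)) mod m"
    unfolding quot_rep_def mod_mult_left_eq by (simp only: ac_simps)
  also have "\<dots> = (a * ((b * inv_rep m b) mod m)) mod m"
    by (simp only: mod_mult_right_eq)
  finally show ?thesis using assms by (simp add: mult_inv_rep_mod unit_rep_mod)
qed

lemma mult_quot_rep_swap_mod:
  assumes "a \<in> U" "b \<in> U"
  shows "(quot_rep m a b * quot_rep m b a) mod m = 1"
proof -
  have "(quot_rep m a b * quot_rep m b a) mod m = ((a * inv_rep m a) * (b * inv_rep m b)) mod m"
    unfolding quot_rep_def mod_mult_eq by (simp only: ac_simps)
  also have "\<dots> = ((a * inv_rep m a) mod m * ((b * inv_rep m b) mod m)) mod m"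
    by (simp only: mod_mult_eq)
  finally show ?thesis using assms by (simp add: mult_inv_rep_mod one_mod)
qed

lemma inv_rep_quot_rep: "a \<in> U \<Longrightarrow> b \<in> U \<Longrightarrow> inv_rep m (quot_rep m a b) = quot_rep m b a"
  by (intro inv_rep_eqI quot_rep_in_unit_reps mult_quot_rep_swap_mod)

lemma quot_rep_mult_mod:
  assumes "g \<in> U" "b \<in> U"
  shows "quot_rep m ((g * b) mod m) b = g"
proof -
  have "quot_rep m ((g * b) mod m) b = (g * (b * inv_rep m b)) mod m"
    unfolding quot_rep_def mod_mult_left_eq by (simp only: mult.assoc)
  also have "\<dots> = (g * ((b * inv_rep m b) mod m)) mod m"
    by (simp only: mod_mult_right_eq)
  finally show ?thesis using assms by (simp add: mult_inv_rep_mod unit_rep_mod)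
qed

text \<open>Distinct monic representatives never differ by a constant factor.\<close>
lemma degree_quot_rep_pos:
  assumes a: "a \<in> MU" and b: "b \<in> MU" and "a \<noteq> b"
  shows "degree (quot_rep m a b) > 0"
proof (rule ccontr)
  assume "\<not> degree (quot_rep m a b) > 0"
  then obtain c where c: "quot_rep m a b = [:c:]" by (metis degree_eq_zeroE neq0_conv)
  have "degree (smult c b) < degree m"
    using b by (simp add: monic_unit_reps_iff unit_reps_def)
  hence "smult c b = a"
    using mult_quot_rep_mod[of a b] a b c by (simp add: monic_unit_reps_iff mod_poly_less)
  moreover from this have "c = 1"
    using a b lead_coeff_smult[of c b] by (simp add: monic_unit_reps_iff)
  ultimately show False using \<open>a \<noteq> b\<close> by simp
qed

lemma degree_quot_rep_not_both_1:
  assumes "a \<in> U" "b \<in> U" "degree m > 2"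
  shows "\<not> (degree (quot_rep m a b) = 1 \<and> degree (quot_rep m b a) = 1)"
proof
  assume deg: "degree (quot_rep m a b) = 1 \<and> degree (quot_rep m b a) = 1"
  hence "degree (quot_rep m a b * quot_rep m b a) = 2"
    using assms unit_rep_nonzero quot_rep_in_unit_reps by (simp add: degree_mult_eq)
  moreover from this have "quot_rep m a b * quot_rep m b a = 1"
    using mult_quot_rep_swap_mod[OF assms(1,2)] assms(3) by (simp add: mod_poly_less)
  ultimately show False by simp
qed

lemma lead_coeff_inv_rep_monic_normalize:
  assumes "a \<in> U" "b \<in> U"
  shows "lead_coeff (inv_rep m (monic_normalize (quot_rep m a b)))
    = lead_coeff (quot_rep m a b) * lead_coeff (quot_rep m b a)"
proof -
  have q: "quot_rep m a b \<in> U" using assms by (rule quot_rep_in_unit_reps)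
  hence "lead_coeff (quot_rep m a b) \<noteq> 0" using unit_rep_nonzero by simp
  hence "inv_rep m (monic_normalize (quot_rep m a b)) = smult (lead_coeff (quot_rep m a b)) (quot_rep m b a)"
    using inv_rep_smult[OF _ q] inv_rep_quot_rep[OF assms] by (simp add: monic_normalize_def)
  thus ?thesis by (simp add: lead_coeff_smult)
qed

lemma card_unit_reps: "card U = (card (UNIV :: 'a set) - 1) * card MU"
proof -
  define decompose where "decompose r = (lead_coeff r, monic_normalize r)" for r :: "'a poly"
  have "bij_betw decompose U ((UNIV - {0}) \<times> MU)"
  proof (rule bij_betw_byWitness[where f' = "\<lambda>(c, a). smult c a"])
    show "\<forall>r\<in>U. (\<lambda>(c, a). smult c a) (decompose r) = r"
      by (simp add: decompose_def unit_rep_nonzero smult_lead_coeff_monic_normalize)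
    show "\<forall>p\<in>(UNIV - {0}) \<times> MU. decompose ((\<lambda>(c, a). smult c a) p) = p"
    proof
      fix p :: "'a \<times> 'a poly" assume "p \<in> (UNIV - {0}) \<times> MU"
      then obtain c a where "p = (c, a)" "c \<noteq> 0" "a \<in> MU" by blast
      thus "decompose ((\<lambda>(c, a). smult c a) p) = p"
        by (simp add: decompose_def monic_unit_reps_iff monic_normalize_smult monic_normalize_monic)
    qed
    show "decompose ` U \<subseteq> (UNIV - {0}) \<times> MU"
      using unit_rep_nonzero monic_normalize_in_monic_unit_reps by (auto simp: decompose_def)
    show "(\<lambda>(c, a). smult c a) ` ((UNIV - {0}) \<times> MU) \<subseteq> U"
      by (auto simp: monic_unit_reps_iff intro!: smult_in_unit_reps)
  qed
  from bij_betw_same_card[OF this] show ?thesis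
    by (simp add: card_cartesian_product card_Diff_singleton)
qed

lemma finite_monic_unit_reps: "finite MU"
  by (rule finite_subset[OF _ finite_degree_less[of "degree m"]])
    (auto simp: monic_unit_reps_def unit_reps_def)

lemma quot_rep_monic_normalize_mult_mod:
  assumes "g \<in> MU" "b \<in> U"
  shows "monic_normalize (quot_rep m (monic_normalize ((g * b) mod m)) b) = g"
proof -
  define x where "x = (g * b) mod m"
  have gU: "g \<in> U" using assms(1) by (simp add: monic_unit_reps_iff)
  have "x \<in> U" unfolding x_def using gU assms(2) by (rule mult_mod_in_unit_reps)
  hence "lead_coeff x \<noteq> 0" using unit_rep_nonzero by simp
  have "quot_rep m (monic_normalize x) b = smult (inverse (lead_coeff x)) g"
    using quot_rep_mult_mod[OF gU assms(2)] by (simp add: monic_normalize_def quot_rep_smult x_def)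
  thus ?thesis using \<open>lead_coeff x \<noteq> 0\<close> assms(1)
    by (simp add: x_def monic_normalize_smult monic_normalize_monic monic_unit_reps_iff)
qed

lemma monic_normalize_mult_quot_rep_mod:
  assumes "a \<in> MU" "b \<in> U"
  shows "monic_normalize ((monic_normalize (quot_rep m a b) * b) mod m) = a"
proof -
  have aU: "a \<in> U" using assms(1) by (simp add: monic_unit_reps_iff)
  have "lead_coeff (quot_rep m a b) \<noteq> 0"
    using unit_rep_nonzero quot_rep_in_unit_reps[OF aU assms(2)] by simp
  moreover have "(monic_normalize (quot_rep m a b) * b) mod m = smult (inverse (lead_coeff (quot_rep m a b))) a"
    using mult_quot_rep_mod[OF aU assms(2)] by (simp add: monic_normalize_def mod_smult_left)
  ultimately show ?thesis using assms(1)
    by (simp add: monic_normalize_smult monic_normalize_monic monic_unit_reps_iff)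
qed

lemma monic_normalize_quot_rep_neq_1:
  assumes "a \<in> MU" "b \<in> MU" "a \<noteq> b"
  shows "monic_normalize (quot_rep m a b) \<noteq> 1"
proof
  have q: "quot_rep m a b \<in> U"
    using assms(1,2) by (simp add: monic_unit_reps_iff quot_rep_in_unit_reps)
  assume "monic_normalize (quot_rep m a b) = 1"
  hence "quot_rep m a b = [:lead_coeff (quot_rep m a b):]"
    using smult_lead_coeff_monic_normalize[of "quot_rep m a b"] unit_rep_nonzero[OF q] by simp
  hence "degree (quot_rep m a b) = 0" by (metis degree_pCons_0)
  thus False using degree_quot_rep_pos[OF assms] by simp
qed

text \<open>Normalising \<open>\<alpha> \<beta>\<^sup>-\<^sup>1\<close> identifies the \<open>\<alpha> \<noteq> \<beta>\<close> with \<open>L(\<alpha> \<beta>\<^sup>-\<^sup>1) L(\<beta> \<alpha>\<^sup>-\<^sup>1) = 1\<close>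
  with the monic \<open>\<gamma> \<noteq> 1\<close> with \<open>L(\<gamma>\<^sup>-\<^sup>1) = 1\<close>; the inverse map is \<open>\<gamma> \<mapsto> \<gamma> \<beta>\<close>, normalised.\<close>
lemma bij_betw_monic_normalize_quot_rep:
  assumes b: "b \<in> MU"
  shows "bij_betw (\<lambda>a. monic_normalize (quot_rep m a b))
    {a \<in> MU. a \<noteq> b \<and> lead_coeff (quot_rep m a b) * lead_coeff (quot_rep m b a) = 1}
    ({g \<in> MU. lead_coeff (inv_rep m g) = 1} - {1})"
    (is "bij_betw ?\<phi> ?A ?B")
proof (rule bij_betw_byWitness[where f' = "\<lambda>g. monic_normalize ((g * b) mod m)"])
  have bU: "b \<in> U" using b by (simp add: monic_unit_reps_iff)
  show "\<forall>a\<in>?A. monic_normalize ((?\<phi> a * b) mod m) = a"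
    using monic_normalize_mult_quot_rep_mod bU by simp
  show "\<forall>g\<in>?B. ?\<phi> (monic_normalize ((g * b) mod m)) = g"
    using quot_rep_monic_normalize_mult_mod bU by simp
  show "?\<phi> ` ?A \<subseteq> ?B"
  proof clarify
    fix a assume a: "a \<in> MU" "a \<noteq> b" "lead_coeff (quot_rep m a b) * lead_coeff (quot_rep m b a) = 1"
    hence aU: "a \<in> U" by (simp add: monic_unit_reps_iff)
    show "?\<phi> a \<in> ?B"
      using monic_normalize_in_monic_unit_reps[OF quot_rep_in_unit_reps[OF aU bU]]
        lead_coeff_inv_rep_monic_normalize[OF aU bU] monic_normalize_quot_rep_neq_1[OF a(1) b a(2)] a(3)
      by simp
  qed
  show "(\<lambda>g. monic_normalize ((g * b) mod m)) ` ?B \<subseteq> ?A"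
  proof
    fix a assume "a \<in> (\<lambda>g. monic_normalize ((g * b) mod m)) ` ?B"
    then obtain g where a: "a = monic_normalize ((g * b) mod m)"
      and g: "g \<in> MU" "lead_coeff (inv_rep m g) = 1" "g \<noteq> 1" by blast
    have "g \<in> U" using g(1) by (simp add: monic_unit_reps_iff)
    hence "a \<in> MU" unfolding a using bU
      by (intro monic_normalize_in_monic_unit_reps mult_mod_in_unit_reps)
    moreover have "?\<phi> a = g"
      unfolding a using g(1) bU by (rule quot_rep_monic_normalize_mult_mod)
    moreover have "a \<noteq> b"
      using calculation g(3) quot_rep_self[OF bU] monic_normalize_monic[of 1] by auto
    ultimately show "a \<in> ?A"
      using lead_coeff_inv_rep_monic_normalize[of a b] g(2) bU by (simp add: monic_unit_reps_iff)
  qed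
qed

lemma card_lead_coeff_quot_rep_pairs:
  assumes "b \<in> MU"
  shows "card {a \<in> MU. a \<noteq> b \<and> lead_coeff (quot_rep m a b) * lead_coeff (quot_rep m b a) = 1}
    = C_m m - 1"
  using bij_betw_same_card[OF bij_betw_monic_normalize_quot_rep[OF assms]]
    one_in_monic_unit_reps inv_rep_one finite_monic_unit_reps
  by (simp add: C_m_def)

lemma C_m_pos: "C_m m > 0"
  unfolding C_m_def using one_in_monic_unit_reps inv_rep_one finite_monic_unit_reps
  by (auto simp: card_gt_0_iff)

lemma N_m_eq_card_monic_unit_reps: "N_m m = card MU"
  using card_field_ge_2[where 'a='a] by (simp add: N_m_def card_unit_reps)

end

section \<open>Determinants of monomial matrices\<close>

lemma prod_monom: "(\<Prod>i\<in>A. monom (f i :: 'a::comm_semiring_1) (g i)) = monom (prod f A) (sum g A)"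
  by (induction A rule: infinite_finite_induct) (simp_all add: mult_monom monom_0 one_pCons)

lemma permutes_moved_points:
  assumes "p permutes S" "finite S" "p \<noteq> id"
  shows "card {i. p i \<noteq> i} \<ge> 2"
    and "card {i. p i \<noteq> i} = 2 \<Longrightarrow> \<exists>a\<in>S. \<exists>b\<in>S. a \<noteq> b \<and> p = Transposition.transpose a b"
proof -
  have moved_sub: "{i. p i \<noteq> i} \<subseteq> S" using assms(1) by (auto simp: permutes_def)
  hence fin: "finite {i. p i \<noteq> i}" using assms(2) finite_subset by blast
  have inj: "inj p" using assms(1) by (rule permutes_inj)
  obtain a where "p a \<noteq> a" using assms(3) by (auto simp: fun_eq_iff)
  define b where "b = p a"
  have "p b \<noteq> b" using \<open>p a \<noteq> a\<close> inj by (auto simp: b_def inj_eq)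
  have ab: "{a, b} \<subseteq> {i. p i \<noteq> i}" "a \<noteq> b" using \<open>p a \<noteq> a\<close> \<open>p b \<noteq> b\<close> by (auto simp: b_def)
  show "card {i. p i \<noteq> i} \<ge> 2" using card_mono[OF fin ab(1)] ab(2) by simp
  assume "card {i. p i \<noteq> i} = 2"
  hence moved: "{i. p i \<noteq> i} = {a, b}"
    using card_subset_eq[OF fin ab(1)] ab(2) by simp
  have "p b = a"
  proof (rule ccontr)
    assume "p b \<noteq> a"
    moreover have "p b \<noteq> b" by fact
    ultimately have "p (p b) = p b" using moved by blast
    thus False using \<open>p b \<noteq> b\<close> inj by (simp add: inj_eq)
  qed
  hence "p = Transposition.transpose a b"
    using moved by (auto simp: fun_eq_iff b_def Transposition.transpose_def)
  thus "\<exists>a\<in>S. \<exists>b\<in>S. a \<noteq> b \<and> p = Transposition.transpose a b"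
    using ab moved_sub by blast
qed

lemma moved_points_transpose: "a \<noteq> b \<Longrightarrow> {i. Transposition.transpose a b i \<noteq> i} = {a, b}"
  by (auto simp: Transposition.transpose_def)

lemma of_int_mult_monom: "(of_int z :: 'a::comm_ring_1 poly) * monom a k = monom (of_int z * a) k"
  by (simp add: of_int_poly mult_monom flip: monom_0)

lemma sum_lessThan_transpose:
  fixes f :: "nat \<Rightarrow> nat \<Rightarrow> 'a::comm_monoid_add"
  assumes "a < n" "b < n" "a \<noteq> b" "\<And>i. i < n \<Longrightarrow> f i i = 0"
  shows "(\<Sum>i<n. f i (Transposition.transpose a b i)) = f a b + f b a"
proof -
  have "(\<Sum>i<n. f i (Transposition.transpose a b i)) = (\<Sum>i\<in>{a, b}. f i (Transposition.transpose a b i))"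
    using assms by (intro sum.mono_neutral_right) auto
  thus ?thesis using assms by simp
qed

lemma prod_lessThan_transpose:
  fixes f :: "nat \<Rightarrow> nat \<Rightarrow> 'a::comm_monoid_mult"
  assumes "a < n" "b < n" "a \<noteq> b" "\<And>i. i < n \<Longrightarrow> f i i = 1"
  shows "(\<Prod>i<n. f i (Transposition.transpose a b i)) = f a b * f b a"
proof -
  have "(\<Prod>i<n. f i (Transposition.transpose a b i)) = (\<Prod>i\<in>{a, b}. f i (Transposition.transpose a b i))"
    using assms by (intro prod.mono_neutral_right) auto
  thus ?thesis using assms by simp
qed

lemma inj_on_transpose_ordered_pairs:
  "inj_on (\<lambda>(a, b). Transposition.transpose a b) {(a, b :: 'a::linorder). a < b}"
proof (rule inj_onI, clarify)
  fix a b a' b' :: 'a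
  assume "a < b" "a' < b'" "Transposition.transpose a b = Transposition.transpose a' b'"
  hence "{a, b} = {a', b'}" using moved_points_transpose[of a b] moved_points_transpose[of a' b'] by simp
  thus "a = a' \<and> b = b'" using \<open>a < b\<close> \<open>a' < b'\<close> by (auto simp: doubleton_eq_iff)
qed

definition monomial_mat :: "nat \<Rightarrow> (nat \<Rightarrow> nat \<Rightarrow> 'a::comm_ring_1) \<Rightarrow> (nat \<Rightarrow> nat \<Rightarrow> nat) \<Rightarrow> 'a poly mat"
  where "monomial_mat n c d = mat n n (\<lambda>(i, j). monom (c i j) (d i j))"

lemma coeff_det_monomial_mat:
  "coeff (det (monomial_mat n c d)) k =
    (\<Sum>p | p permutes {..<n} \<and> (\<Sum>i<n. d i (p i)) = k. of_int (sign p) * (\<Prod>i<n. c i (p i)))"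
proof -
  let ?P = "{p. p permutes {..<n}}"
  have "det (monomial_mat n c d)
      = (\<Sum>p\<in>?P. monom (of_int (sign p) * (\<Prod>i<n. c i (p i))) (\<Sum>i<n. d i (p i)))"
  proof -
    have carrier: "monomial_mat n c d \<in> carrier_mat n n" by (simp add: monomial_mat_def)
    have "det (monomial_mat n c d) = (\<Sum>p\<in>?P. of_int (sign p) * (\<Prod>i<n. monom (c i (p i)) (d i (p i))))"
      unfolding det_def'[OF carrier] atLeast0LessThan
      using permutes_in_image
      by (intro sum.cong arg_cong2[where f = "(*)"] prod.cong) (fastforce simp: monomial_mat_def)+
    thus ?thesis by (simp add: prod_monom of_int_mult_monom)
  qed
  hence "coeff (det (monomial_mat n c d)) k
      = (\<Sum>p\<in>?P. if (\<Sum>i<n. d i (p i)) = k then of_int (sign p) * (\<Prod>i<n. c i (p i)) else 0)"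
    by (simp add: coeff_sum coeff_monom)
  also have "\<dots> = (\<Sum>p | p permutes {..<n} \<and> (\<Sum>i<n. d i (p i)) = k. of_int (sign p) * (\<Prod>i<n. c i (p i)))"
    by (simp add: sum.inter_filter[symmetric] finite_permutations)
  finally show ?thesis .
qed

locale monomial_mat_identity_at_0 =
  fixes n :: nat and c :: "nat \<Rightarrow> nat \<Rightarrow> 'a::comm_ring_1" and d :: "nat \<Rightarrow> nat \<Rightarrow> nat"
  assumes diagonal: "i < n \<Longrightarrow> d i i = 0 \<and> c i i = 1"
    and off_diagonal: "i < n \<Longrightarrow> j < n \<Longrightarrow> i \<noteq> j \<Longrightarrow> d i j > 0"
begin

lemma card_moved_points_le_degree:
  assumes "p permutes {..<n}"
  shows "card {i. p i \<noteq> i} \<le> (\<Sum>i<n. d i (p i))"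
proof -
  have moved: "{i. p i \<noteq> i} \<subseteq> {..<n}" using assms by (auto simp: permutes_def)
  have "card {i. p i \<noteq> i} = (\<Sum>i | p i \<noteq> i. 1)" by simp
  also have "\<dots> \<le> (\<Sum>i | p i \<noteq> i. d i (p i))"
  proof (rule sum_mono)
    fix i assume "i \<in> {i. p i \<noteq> i}"
    moreover from this have "i < n" using moved by auto
    moreover from this have "p i < n" using permutes_in_image[OF assms] by simp
    ultimately show "1 \<le> d i (p i)" using off_diagonal by (simp add: Suc_le_eq)
  qed
  also have "\<dots> \<le> (\<Sum>i<n. d i (p i))" using moved by (intro sum_mono2) auto
  finally show ?thesis .
qed

lemma coeff_det_lt_2:
  assumes "k < 2"
  shows "coeff (det (monomial_mat n c d)) k = (if k = 0 then 1 else 0)"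
proof -
  have "{p. p permutes {..<n} \<and> (\<Sum>i<n. d i (p i)) = k} = (if k = 0 then {id} else {})"
  proof (intro equalityI subsetI)
    fix p assume p: "p \<in> {p. p permutes {..<n} \<and> (\<Sum>i<n. d i (p i)) = k}"
    hence "p = id"
      using permutes_moved_points(1)[of p "{..<n}"] card_moved_points_le_degree[of p] assms by force
    thus "p \<in> (if k = 0 then {id} else {})" using p by (simp add: diagonal)
  qed (auto simp: permutes_id diagonal split: if_splits)
  thus ?thesis by (simp add: coeff_det_monomial_mat diagonal)
qed

lemma permutations_of_degree_2:
  "{p. p permutes {..<n} \<and> (\<Sum>i<n. d i (p i)) = 2}
    = (\<lambda>(a, b). Transposition.transpose a b) ` {(a, b). a < b \<and> b < n \<and> d a b = 1 \<and> d b a = 1}"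
    (is "?P = ?T ` ?Q")
proof -
  have degree_transpose: "(\<Sum>i<n. d i (Transposition.transpose a b i)) = d a b + d b a"
    if "a < n" "b < n" "a \<noteq> b" for a b
    using that diagonal by (intro sum_lessThan_transpose) auto
  show ?thesis
  proof (intro equalityI subsetI)
    fix p assume p: "p \<in> ?P"
    hence "p \<noteq> id" by (auto simp: diagonal)
    with p have "card {i. p i \<noteq> i} = 2"
      using permutes_moved_points(1)[of p "{..<n}"] card_moved_points_le_degree[of p] by force
    then obtain a b where ab: "a < n" "b < n" "a < b" "p = Transposition.transpose a b"
      using permutes_moved_points(2)[of p "{..<n}"] p \<open>p \<noteq> id\<close>
      by (auto simp: linorder_neq_iff) (metis transpose_commute)
    moreover have "d a b > 0" "d b a > 0" using ab off_diagonal by auto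
    ultimately show "p \<in> ?T ` ?Q" using p degree_transpose[of a b] by auto
  next
    fix p assume "p \<in> ?T ` ?Q"
    thus "p \<in> ?P" by (auto simp: permutes_swap_id degree_transpose)
  qed
qed

lemma coeff_det_2:
  "coeff (det (monomial_mat n c d)) 2 = - (\<Sum>(a, b) | a < b \<and> b < n \<and> d a b = 1 \<and> d b a = 1. c a b * c b a)"
proof -
  let ?Q = "{(a, b). a < b \<and> b < n \<and> d a b = 1 \<and> d b a = 1}"
  have "inj_on (\<lambda>(a, b). Transposition.transpose a b) ?Q"
    by (rule inj_on_subset[OF inj_on_transpose_ordered_pairs]) auto
  hence "coeff (det (monomial_mat n c d)) 2
      = (\<Sum>(a, b)\<in>?Q. of_int (sign (Transposition.transpose a b)) * (\<Prod>i<n. c i (Transposition.transpose a b i)))"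
    by (simp add: coeff_det_monomial_mat permutations_of_degree_2 sum.reindex case_prod_unfold)
  also have "\<dots> = (\<Sum>(a, b)\<in>?Q. - (c a b * c b a))"
    using diagonal by (intro sum.cong) (auto simp: sign_swap_id prod_lessThan_transpose)
  finally show ?thesis by (simp add: case_prod_unfold sum_negf)
qed

end

lemma coeff_mult_low:
  fixes p q :: "'a::comm_semiring_1 poly"
  shows "coeff (p * q) 0 = coeff p 0 * coeff q 0"
    and "coeff (p * q) 1 = coeff p 0 * coeff q 1 + coeff p 1 * coeff q 0"
    and "coeff (p * q) 2 = coeff p 0 * coeff q 2 + coeff p 1 * coeff q 1 + coeff p 2 * coeff q 0"
  by (simp_all add: coeff_mult numeral_2_eq_2 atMost_Suc ac_simps)

lemma coeff_prod_list_low: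
  fixes ps :: "'a::comm_semiring_1 poly list"
  assumes "\<And>p. p \<in> set ps \<Longrightarrow> coeff p 0 = 1 \<and> coeff p 1 = 0"
  shows "coeff (prod_list ps) 0 = 1 \<and> coeff (prod_list ps) 1 = 0
    \<and> coeff (prod_list ps) 2 = (\<Sum>p\<leftarrow>ps. coeff p 2)"
  using assms
  by (induction ps) (simp_all add: coeff_mult_low coeff_mult_low[unfolded One_nat_def] add.commute)

lemma foldr_mult_carrier_mat:
  "(\<And>x. A x \<in> carrier_mat n n) \<Longrightarrow> foldr (\<lambda>x M. A x * M) xs (1\<^sub>m n) \<in> carrier_mat n n"
  by (induction xs) (auto intro!: mult_carrier_mat)

lemma det_foldr_mult:
  fixes A :: "'b \<Rightarrow> 'a::comm_ring_1 mat"
  assumes "\<And>x. A x \<in> carrier_mat n n"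
  shows "det (foldr (\<lambda>x M. A x * M) xs (1\<^sub>m n)) = (\<Prod>x\<leftarrow>xs. det (A x))"
  using assms by (induction xs) (simp_all add: det_mult[OF assms foldr_mult_carrier_mat[OF assms]])

lemma sum_ordered_pairs_symmetric:
  fixes f :: "nat \<Rightarrow> nat \<Rightarrow> 'a::comm_monoid_add"
  assumes "\<And>a b. f a b = f b a"
  shows "(\<Sum>(a, b) | a < b \<and> b < n. f a b) + (\<Sum>(a, b) | a < b \<and> b < n. f a b)
    = (\<Sum>(a, b) | a \<noteq> b \<and> a < n \<and> b < n. f a b)"
proof -
  let ?L = "{(a, b). a < b \<and> b < n}"
  have "finite ?L" by (rule finite_subset[of _ "{..<n} \<times> {..<n}"]) auto
  moreover have "{(a, b). a \<noteq> b \<and> a < n \<and> b < n} = ?L \<union> prod.swap ` ?L"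
    by (auto simp: image_iff linorder_neq_iff)
  moreover have "(\<Sum>(a, b)\<in>prod.swap ` ?L. f a b) = (\<Sum>(a, b)\<in>?L. f a b)"
    by (subst sum.reindex) (auto simp: inj_on_def assms)
  moreover have "(\<Sum>(a, b)\<in>?L \<union> prod.swap ` ?L. f a b)
      = (\<Sum>(a, b)\<in>?L. f a b) + (\<Sum>(a, b)\<in>prod.swap ` ?L. f a b)"
    using \<open>finite ?L\<close> by (intro sum.union_disjoint) auto
  ultimately show ?thesis by simp
qed

lemma finite_off_diagonal_pairs: "finite {(a, b). a \<noteq> b \<and> a < n \<and> b < (n::nat)}"
  by (rule finite_subset[of _ "{..<n} \<times> {..<n}"]) auto

lemma card_off_diagonal_pairs: "card {(a, b). a \<noteq> b \<and> a < n \<and> b < (n::nat)} = n * (n - 1)"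
proof -
  have "{(a, b). a \<noteq> b \<and> a < n \<and> b < n} = (SIGMA a:{..<n}. {..<n} - {a})" by auto
  thus ?thesis by (simp add: card_Diff_singleton)
qed

lemma sum_if_minus_1:
  fixes c :: "'a::comm_ring_1"
  assumes "finite S"
  shows "(\<Sum>x\<in>S. (if P x then c else 0) - 1) = c * of_nat (card {x \<in> S. P x}) - of_nat (card S)"
proof -
  have "(\<Sum>x\<in>S. if P x then c else 0) = (\<Sum>x\<in>{x \<in> S. P x}. c)"
    using assms by (rule sum.inter_filter[symmetric])
  thus ?thesis by (simp add: sum_subtractf mult.commute)
qed

section \<open>The matrices \<open>D\<^sub>m\<^sup>\<lambda>\<close>\<close>

locale unit_residue_enumeration = unit_residues m for m :: "'a::{finite,field} poly" +
  fixes als :: "'a poly list"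
  assumes distinct_als: "distinct als" and set_als: "set als = monic_unit_reps m"
begin

definition deg_quot :: "nat \<Rightarrow> nat \<Rightarrow> nat"
  where "deg_quot i j = degree (quot_rep m (als ! i) (als ! j))"

definition lc_quot :: "nat \<Rightarrow> nat \<Rightarrow> 'a"
  where "lc_quot i j = lead_coeff (quot_rep m (als ! i) (als ! j))"

lemma nth_als_in_monic_unit_reps: "i < length als \<Longrightarrow> als ! i \<in> MU"
  using set_als nth_mem by blast

lemma nth_als_in_unit_reps: "i < length als \<Longrightarrow> als ! i \<in> U"
  using nth_als_in_monic_unit_reps by (simp add: monic_unit_reps_iff)

lemma lc_quot_nonzero: "i < length als \<Longrightarrow> j < length als \<Longrightarrow> lc_quot i j \<noteq> 0"
  using unit_rep_nonzero quot_rep_in_unit_reps nth_als_in_unit_reps by (simp add: lc_quot_def)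

lemma N_m_eq_length: "N_m m = length als"
  using distinct_card[OF distinct_als] by (simp add: N_m_eq_card_monic_unit_reps set_als)

lemma D_mat_eq_monomial_mat:
  "D_mat m als \<chi> = monomial_mat (length als) (\<lambda>i j. inverse (\<chi> (lc_quot i j))) deg_quot"
  by (simp add: D_mat_def monomial_mat_def deg_quot_def lc_quot_def)

lemma monomial_mat_identity_at_0_D_mat:
  fixes \<chi> :: "'a \<Rightarrow> complex"
  assumes "\<chi> 1 = 1"
  shows "monomial_mat_identity_at_0 (length als) (\<lambda>i j. inverse (\<chi> (lc_quot i j))) deg_quot"
proof
  fix i assume "i < length als"
  thus "deg_quot i i = 0 \<and> inverse (\<chi> (lc_quot i i)) = 1"
    using assms by (simp add: deg_quot_def lc_quot_def quot_rep_self nth_als_in_unit_reps)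
next
  fix i j assume "i < length als" "j < length als" "i \<noteq> j"
  thus "deg_quot i j > 0"
    using distinct_als
    by (simp add: deg_quot_def degree_quot_rep_pos nth_als_in_monic_unit_reps nth_eq_iff_index_eq)
qed

lemma coeff_det_D_minus:
  assumes "distinct chis" and "\<And>\<chi>. \<chi> \<in> set chis \<Longrightarrow> \<chi> 1 = 1"
  shows "coeff (det (D_minus m als chis)) 1 = 0"
    and "coeff (det (D_minus m als chis)) 2 =
      - (\<Sum>(a, b) | a < b \<and> b < length als \<and> deg_quot a b = 1 \<and> deg_quot b a = 1.
           \<Sum>\<chi>\<in>set chis. inverse (\<chi> (lc_quot a b)) * inverse (\<chi> (lc_quot b a)))"
proof -
  let ?Q = "{(a, b). a < b \<and> b < length als \<and> deg_quot a b = 1 \<and> deg_quot b a = 1}"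
  have det: "det (D_minus m als chis) = (\<Prod>\<chi>\<leftarrow>chis. det (D_mat m als \<chi>))"
    unfolding D_minus_def by (rule det_foldr_mult) (simp add: D_mat_def)
  have D_identity_at_0:
    "monomial_mat_identity_at_0 (length als) (\<lambda>i j. inverse (\<chi> (lc_quot i j))) deg_quot"
    if "\<chi> \<in> set chis" for \<chi>
    using assms(2)[OF that] by (rule monomial_mat_identity_at_0_D_mat)
  have "coeff (det (D_mat m als \<chi>)) 0 = 1 \<and> coeff (det (D_mat m als \<chi>)) 1 = 0"
    if "\<chi> \<in> set chis" for \<chi>
    using monomial_mat_identity_at_0.coeff_det_lt_2[OF D_identity_at_0[OF that], of 0]
      monomial_mat_identity_at_0.coeff_det_lt_2[OF D_identity_at_0[OF that], of 1]
    by (simp add: D_mat_eq_monomial_mat)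
  hence "coeff (det (D_minus m als chis)) 1 = 0
      \<and> coeff (det (D_minus m als chis)) 2 = (\<Sum>\<chi>\<in>set chis. coeff (det (D_mat m als \<chi>)) 2)"
    using coeff_prod_list_low[of "map (\<lambda>\<chi>. det (D_mat m als \<chi>)) chis"] assms(1)
    by (auto simp: det sum_list_distinct_conv_sum_set)
  moreover have "coeff (det (D_mat m als \<chi>)) 2
      = - (\<Sum>(a, b)\<in>?Q. inverse (\<chi> (lc_quot a b)) * inverse (\<chi> (lc_quot b a)))"
    if "\<chi> \<in> set chis" for \<chi>
    using monomial_mat_identity_at_0.coeff_det_2[OF D_identity_at_0[OF that]]
    by (simp add: D_mat_eq_monomial_mat)
  ultimately show "coeff (det (D_minus m als chis)) 1 = 0"
    and "coeff (det (D_minus m als chis)) 2 =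
      - (\<Sum>(a, b)\<in>?Q. \<Sum>\<chi>\<in>set chis. inverse (\<chi> (lc_quot a b)) * inverse (\<chi> (lc_quot b a)))"
    by (simp_all add: sum_negf case_prod_unfold sum.swap[of _ "set chis"])
qed

lemma coeff_2_det_D_minus_degree_gt_2:
  assumes "degree m > 2" "distinct chis" "\<And>\<chi>. \<chi> \<in> set chis \<Longrightarrow> \<chi> 1 = 1"
  shows "coeff (det (D_minus m als chis)) 2 = 0"
proof -
  have "{(a, b). a < b \<and> b < length als \<and> deg_quot a b = 1 \<and> deg_quot b a = 1} = {}"
    using degree_quot_rep_not_both_1[OF _ _ assms(1)] nth_als_in_unit_reps
    by (auto simp: deg_quot_def)
  with coeff_det_D_minus(2)[OF assms(2)] assms(3) show ?thesis by (simp only: sum.empty) simp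
qed

lemma card_lc_quot_pairs:
  assumes "a < length als"
  shows "card {b. b < length als \<and> b \<noteq> a \<and> lc_quot a b * lc_quot b a = 1} = C_m m - 1"
proof -
  let ?I = "{b. b < length als \<and> b \<noteq> a \<and> lc_quot a b * lc_quot b a = 1}"
  have "(\<lambda>b. als ! b) ` ?I = {x \<in> MU. x \<noteq> als ! a \<and>
      lead_coeff (quot_rep m x (als ! a)) * lead_coeff (quot_rep m (als ! a) x) = 1}"
  proof (intro equalityI subsetI)
    fix x assume "x \<in> (\<lambda>b. als ! b) ` ?I"
    thus "x \<in> {x \<in> MU. x \<noteq> als ! a \<and>
        lead_coeff (quot_rep m x (als ! a)) * lead_coeff (quot_rep m (als ! a) x) = 1}"
      using assms distinct_als nth_als_in_monic_unit_reps
      by (auto simp: lc_quot_def nth_eq_iff_index_eq mult.commute)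
  next
    fix x assume x: "x \<in> {x \<in> MU. x \<noteq> als ! a \<and>
        lead_coeff (quot_rep m x (als ! a)) * lead_coeff (quot_rep m (als ! a) x) = 1}"
    then obtain b where "b < length als" "x = als ! b"
      using set_als by (metis (no_types, lifting) in_set_conv_nth mem_Collect_eq)
    thus "x \<in> (\<lambda>b. als ! b) ` ?I" using x by (auto simp: lc_quot_def mult.commute)
  qed
  moreover have "inj_on (\<lambda>b. als ! b) ?I"
    using distinct_als by (intro inj_on_nth) auto
  ultimately show ?thesis
    using card_lead_coeff_quot_rep_pairs[OF nth_als_in_monic_unit_reps[OF assms]]
    by (simp add: card_image[symmetric])
qed

lemma deg_quot_eq_1:
  assumes "degree m = 2" "a < length als" "b < length als" "a \<noteq> b"
  shows "deg_quot a b = 1"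
proof -
  have "deg_quot a b > 0"
    using assms(2-4) distinct_als
    by (simp add: deg_quot_def degree_quot_rep_pos nth_als_in_monic_unit_reps nth_eq_iff_index_eq)
  moreover have "deg_quot a b < 2"
    using quot_rep_in_unit_reps[OF nth_als_in_unit_reps nth_als_in_unit_reps] assms
    by (simp add: deg_quot_def unit_reps_def)
  ultimately show ?thesis by simp
qed

lemma sum_nontrivial_characters_lc_quot:
  assumes "a < length als" "b < length als"
  shows "(\<Sum>\<chi>\<in>nontrivial_characters. inverse (\<chi> (lc_quot a b)) * inverse (\<chi> (lc_quot b a)))
    = (if lc_quot a b * lc_quot b a = 1 then of_nat (card (UNIV :: 'a set)) - 1 else 0) - 1"
proof -
  have nonzero: "lc_quot a b \<noteq> 0" "lc_quot b a \<noteq> 0" using lc_quot_nonzero assms by simp_all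
  have "inverse (\<chi> (lc_quot a b)) * inverse (\<chi> (lc_quot b a)) = \<chi> (inverse (lc_quot a b * lc_quot b a))"
    if "\<chi> \<in> nontrivial_characters" for \<chi>
    using that nonzero by (simp add: nontrivial_characters_def character_inverse character_mult)
  hence "(\<Sum>\<chi>\<in>nontrivial_characters. inverse (\<chi> (lc_quot a b)) * inverse (\<chi> (lc_quot b a)))
      = (\<Sum>\<chi>\<in>nontrivial_characters. \<chi> (inverse (lc_quot a b * lc_quot b a)))"
    by (rule sum.cong[OF refl])
  also have "\<dots> = (if inverse (lc_quot a b * lc_quot b a) = 1 then of_nat (card (UNIV :: 'a set)) - 1 else 0) - 1"
    using nonzero by (intro sum_nontrivial_characters) simp
  finally show ?thesis by (simp only: inverse_eq_1_iff)
qed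

lemma card_lc_quot_off_diagonal_pairs:
  "card {(a, b). a \<noteq> b \<and> a < length als \<and> b < length als \<and> lc_quot a b * lc_quot b a = 1}
    = length als * (C_m m - 1)"
proof -
  have "{(a, b). a \<noteq> b \<and> a < length als \<and> b < length als \<and> lc_quot a b * lc_quot b a = 1}
      = (SIGMA a:{..<length als}. {b. b < length als \<and> b \<noteq> a \<and> lc_quot a b * lc_quot b a = 1})"
    by auto
  thus ?thesis by (simp add: card_lc_quot_pairs)
qed

lemma coeff_2_det_D_minus_degree_2:
  assumes "degree m = 2" "distinct chis" "set chis = nontrivial_characters"
  shows "coeff (det (D_minus m als chis)) 2 = of_nat (N_m m) / 2 *
    ((of_nat (card (UNIV :: 'a set)) - 1) * (1 - of_nat (C_m m)) + of_nat (N_m m) - 1)"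
proof -
  define n where "n = length als"
  define q where "q = (of_nat (card (UNIV :: 'a set)) - 1 :: complex)"
  define g where "g a b = (if lc_quot a b * lc_quot b a = 1 then q else 0) - 1" for a b
  have "\<chi> 1 = 1" if "\<chi> \<in> set chis" for \<chi>
    using that assms(3) by (simp add: nontrivial_characters_def character_1)
  with coeff_det_D_minus(2)[OF assms(2)]
  have "coeff (det (D_minus m als chis)) 2 = - (\<Sum>(a, b) | a < b \<and> b < n \<and> deg_quot a b = 1 \<and> deg_quot b a = 1.
      \<Sum>\<chi>\<in>set chis. inverse (\<chi> (lc_quot a b)) * inverse (\<chi> (lc_quot b a)))"
    by (simp only: n_def)
  also have "\<dots> = - (\<Sum>(a, b) | a < b \<and> b < n. g a b)"
    using deg_quot_eq_1[OF assms(1)] sum_nontrivial_characters_lc_quot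
    by (intro arg_cong[where f = uminus] sum.cong) (auto simp: n_def g_def q_def assms(3))
  finally have coeff_2: "coeff (det (D_minus m als chis)) 2 = - (\<Sum>(a, b) | a < b \<and> b < n. g a b)" .
  have "(\<Sum>(a, b) | a < b \<and> b < n. g a b) + (\<Sum>(a, b) | a < b \<and> b < n. g a b)
      = (\<Sum>(a, b) | a \<noteq> b \<and> a < n \<and> b < n. g a b)"
    by (rule sum_ordered_pairs_symmetric) (simp add: g_def mult.commute)
  also have "\<dots> = q * of_nat (n * (C_m m - 1)) - of_nat (n * (n - 1))"
    using sum_if_minus_1[OF finite_off_diagonal_pairs, of "\<lambda>(a, b). lc_quot a b * lc_quot b a = 1" q n]
      card_lc_quot_off_diagonal_pairs card_off_diagonal_pairs
    by (simp add: g_def n_def case_prod_unfold)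
  also have "of_nat (n * (C_m m - 1)) = (of_nat n * (of_nat (C_m m) - 1) :: complex)"
    using C_m_pos by (simp add: of_nat_diff Suc_le_eq)
  also have "of_nat (n * (n - 1)) = (of_nat n * (of_nat n - 1) :: complex)"
    by (cases n) (simp_all add: algebra_simps)
  finally show ?thesis
    unfolding coeff_2 N_m_eq_length q_def[symmetric] n_def[symmetric] by (simp add: field_simps)
qed

end

theorem proposition4p1:
  fixes m :: "'a::{finite,field} poly"
    and als :: "'a poly list"
    and chis :: "('a \<Rightarrow> complex) list"
  assumes "lead_coeff m = 1"
    and "degree m > 1"
    and "distinct als" and "set als = monic_unit_reps m"
    and "distinct chis" and "set chis = nontrivial_characters"
  shows "coeff (det (D_minus m als chis)) 1 = 0
    \<and> (degree m > 2 \<longrightarrow> coeff (det (D_minus m als chis)) 2 = 0)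
    \<and> (degree m = 2 \<longrightarrow> coeff (det (D_minus m als chis)) 2 =
           of_nat (N_m m) / 2 *
           ((of_nat (card (UNIV :: 'a set)) - 1) * (1 - of_nat (C_m m)) + of_nat (N_m m) - 1))"
proof -
  interpret unit_residue_enumeration m als
    using assms(2-4) by unfold_locales simp_all
  have "\<chi> 1 = 1" if "\<chi> \<in> set chis" for \<chi>
    using that assms(6) by (simp add: nontrivial_characters_def characters_def)
  thus ?thesis
    using coeff_det_D_minus(1) coeff_2_det_D_minus_degree_gt_2 coeff_2_det_D_minus_degree_2 assms(5,6)
    by blast
qed

end
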